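(* Let $\mathcal K$ be a finitely complete 2-category with a good yoneda structure. Let $C$ be small, $i:M\to\mathcal PC$ and $f:C\to A$ with $M$ and $f$ admissible, and let $p:y_C/i\to C$, $q:y_C/i\to M$, $\lambda:y_Cp\Rightarrow iq$ be the lax pullback of $y_C$ and $i$. Let $k:M\to A$, let $\eta:i\Rightarrow A(f,1)k$ be a 2-cell and $\eta':fp\Rightarrow kq$ the corresponding 2-cell, i.e. the unique one with $(A(f,1)\eta')\cdot(\chi^fp)=(\eta q)\cdot\lambda$. Then: (1) $\eta$ exhibits $k$ as a left lifting of $i$ along $A(f,1)$ iff $\eta'$ exhibits $k$ as a left extension of $fp$ along $q$; (2) $\eta$ exhibits $k$ as an absolute left lifting of $i$ along $A(f,1)$ iff $\eta'$ exhibits $k$ as a pointwise left extension of $fp$ along $q$.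
   Context: For $f:A\to B$, $g:C\to B$ the lax pullback $f/g$ has projections $p:f/g\to A$, $q:f/g\to C$ and universal 2-cell $\lambda:fp\Rightarrow gq$. Given $f:A\to C$, $g:A\to B$, $h:B\to C$, a 2-cell $\phi:f\Rightarrow hg$ exhibits $h$ as a left extension of $f$ along $g$ if for every $k:B\to C$, $\kappa\mapsto(\kappa g)\cdot\phi$ is a bijection from 2-cells $h\Rightarrow k$ to 2-cells $f\Rightarrow kg$; it exhibits $g$ as a left lifting of $f$ along (through) $h$ if for every $k:A\to B$, $\kappa\mapsto(h\kappa)\cdot\phi$ is a bijection from 2-cells $g\Rightarrow k$ to 2-cells $f\Rightarrow hk$; the lifting is absolute if $\phi j$ exhibits $gj$ as a left lifting of $fj$ along $h$ for all $j:D\to A$. $\phi$ exhibits $h$ as a pointwise left extension of $f$ along $g$ if for every $c:X\to B$, with lax pullback $p:g/c\to A$, $q:g/c\to X$, $\lambda:gp\Rightarrow cq$, $(h\lambda)\cdot(\phi p)$ exhibits $hc$ as a left extension of $fp$ along $q$. A good yoneda structure: a class of admissible 1-cells with $fg$ admissible whenever $f$ is; $A$ admissible when $1_A$ is; for admissible $A$ an object $\mathcal PA$ and admissible $y_A:A\to\mathcal PA$; for $f:A\to B$ with $A$, $f$ admissible a 1-cell $B(f,1):B\to\mathcal PA$ and 2-cell $\chi^f:y_A\Rightarrow B(f,1)f$; such that (i) $\chi^f$ exhibits $f$ as an absolute left lifting of $y_A$ through $B(f,1)$; (ii) if $A$, $f:A\to B$ admissible and $\psi:y_A\Rightarrow gf$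 exhibits $f$ as an absolute left lifting of $y_A$ along $g$, then $\psi$ exhibits $g$ as a pointwise left extension of $y_A$ along $f$. $C$ is small if $C$ and $\mathcal PC$ are admissible. In this setting $\lambda$ exhibits $i$ as a left extension of $y_Cp$ along $q$ and $\chi^f$ is a left lifting, so the defining equation gives a bijection $\eta\mapsto\eta'$ between 2-cells $i\Rightarrow A(f,1)k$ and 2-cells $fp\Rightarrow kq$. *)

theory Defs
  imports Main
begin

text \<open>A (strict) 2-category with objects of type 'o, 1-cells of type 'a and
2-cells of type 'c. comp1 g f is the composite g f (first f, then g);
vcomp b a is the vertical composite b . a (first a, then b);
hcomp b a is the horizontal composite b * a (a on the right).\<close>

record ('o, 'a, 'c) two_cat =
  dom1  :: "'a \<Rightarrow> 'o"
  cod1  :: "'a \<Rightarrow> 'o"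
  id1   :: "'o \<Rightarrow> 'a"
  comp1 :: "'a \<Rightarrow> 'a \<Rightarrow> 'a"
  src2  :: "'c \<Rightarrow> 'a"
  tgt2  :: "'c \<Rightarrow> 'a"
  id2   :: "'a \<Rightarrow> 'c"
  vcomp :: "'c \<Rightarrow> 'c \<Rightarrow> 'c"
  hcomp :: "'c \<Rightarrow> 'c \<Rightarrow> 'c"

definition arr1 :: "('o,'a,'c,'x) two_cat_scheme \<Rightarrow> 'a \<Rightarrow> 'o \<Rightarrow> 'o \<Rightarrow> bool" where
  "arr1 K f A B \<longleftrightarrow> dom1 K f = A \<and> cod1 K f = B"

definition cell2 :: "('o,'a,'c,'x) two_cat_scheme \<Rightarrow> 'c \<Rightarrow> 'a \<Rightarrow> 'a \<Rightarrow> bool" where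
  "cell2 K \<alpha> f g \<longleftrightarrow> src2 K \<alpha> = f \<and> tgt2 K \<alpha> = g"

definition lw :: "('o,'a,'c,'x) two_cat_scheme \<Rightarrow> 'a \<Rightarrow> 'c \<Rightarrow> 'c" where
  "lw K h \<alpha> = hcomp K (id2 K h) \<alpha>"

definition rw :: "('o,'a,'c,'x) two_cat_scheme \<Rightarrow> 'c \<Rightarrow> 'a \<Rightarrow> 'c" where
  "rw K \<alpha> j = hcomp K \<alpha> (id2 K j)"

definition two_category :: "('o,'a,'c,'x) two_cat_scheme \<Rightarrow> bool" where
  "two_category K \<longleftrightarrow>
    \<comment> \<open>underlying category of 1-cells\<close>
    (\<forall>A. arr1 K (id1 K A) A A) \<and>
    (\<forall>f g. dom1 K f = cod1 K g \<longrightarrow> arr1 K (comp1 K f g) (dom1 K g) (cod1 K f)) \<and>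
    (\<forall>f g h. dom1 K f = cod1 K g \<and> dom1 K g = cod1 K h \<longrightarrow>
        comp1 K (comp1 K f g) h = comp1 K f (comp1 K g h)) \<and>
    (\<forall>f. comp1 K f (id1 K (dom1 K f)) = f \<and> comp1 K (id1 K (cod1 K f)) f = f) \<and>
    \<comment> \<open>2-cells go between parallel 1-cells\<close>
    (\<forall>\<alpha>. dom1 K (src2 K \<alpha>) = dom1 K (tgt2 K \<alpha>) \<and> cod1 K (src2 K \<alpha>) = cod1 K (tgt2 K \<alpha>)) \<and>
    \<comment> \<open>vertical composition: hom categories\<close>
    (\<forall>f. cell2 K (id2 K f) f f) \<and>
    (\<forall>\<alpha> \<beta>. tgt2 K \<alpha> = src2 K \<beta> \<longrightarrow> cell2 K (vcomp K \<beta> \<alpha>) (src2 K \<alpha>) (tgt2 K \<beta>)) \<and>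
    (\<forall>\<alpha> \<beta> \<gamma>. tgt2 K \<alpha> = src2 K \<beta> \<and> tgt2 K \<beta> = src2 K \<gamma> \<longrightarrow>
        vcomp K (vcomp K \<gamma> \<beta>) \<alpha> = vcomp K \<gamma> (vcomp K \<beta> \<alpha>)) \<and>
    (\<forall>\<alpha>. vcomp K \<alpha> (id2 K (src2 K \<alpha>)) = \<alpha> \<and> vcomp K (id2 K (tgt2 K \<alpha>)) \<alpha> = \<alpha>) \<and>
    \<comment> \<open>horizontal composition\<close>
    (\<forall>\<alpha> \<beta>. dom1 K (src2 K \<beta>) = cod1 K (src2 K \<alpha>) \<longrightarrow>
        cell2 K (hcomp K \<beta> \<alpha>) (comp1 K (src2 K \<beta>) (src2 K \<alpha>)) (comp1 K (tgt2 K \<beta>) (tgt2 K \<alpha>))) \<and>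
    (\<forall>\<alpha> \<beta> \<gamma>. dom1 K (src2 K \<gamma>) = cod1 K (src2 K \<beta>) \<and> dom1 K (src2 K \<beta>) = cod1 K (src2 K \<alpha>) \<longrightarrow>
        hcomp K (hcomp K \<gamma> \<beta>) \<alpha> = hcomp K \<gamma> (hcomp K \<beta> \<alpha>)) \<and>
    (\<forall>\<alpha>. hcomp K \<alpha> (id2 K (id1 K (dom1 K (src2 K \<alpha>)))) = \<alpha> \<and>
         hcomp K (id2 K (id1 K (cod1 K (src2 K \<alpha>)))) \<alpha> = \<alpha>) \<and>
    (\<forall>f g. dom1 K g = cod1 K f \<longrightarrow> hcomp K (id2 K g) (id2 K f) = id2 K (comp1 K g f)) \<and>
    \<comment> \<open>interchange law\<close>
    (\<forall>\<alpha> \<alpha>' \<beta> \<beta>'. tgt2 K \<alpha> = src2 K \<alpha>' \<and> tgt2 K \<beta> = src2 K \<beta>' \<and>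
        dom1 K (src2 K \<beta>) = cod1 K (src2 K \<alpha>) \<longrightarrow>
        hcomp K (vcomp K \<beta>' \<beta>) (vcomp K \<alpha>' \<alpha>) = vcomp K (hcomp K \<beta>' \<alpha>') (hcomp K \<beta> \<alpha>))"

definition is_lax_pullback ::
  "('o,'a,'c,'x) two_cat_scheme \<Rightarrow> 'a \<Rightarrow> 'a \<Rightarrow> 'o \<Rightarrow> 'a \<Rightarrow> 'a \<Rightarrow> 'c \<Rightarrow> bool" where
  "is_lax_pullback K f g P p q l \<longleftrightarrow>
     cod1 K f = cod1 K g \<and>
     arr1 K p P (dom1 K f) \<and> arr1 K q P (dom1 K g) \<and>
     cell2 K l (comp1 K f p) (comp1 K g q) \<and>
     (\<forall>X a c \<theta>. arr1 K a X (dom1 K f) \<and> arr1 K c X (dom1 K g) \<and>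
        cell2 K \<theta> (comp1 K f a) (comp1 K g c) \<longrightarrow>
        (\<exists>!u. arr1 K u X P \<and> comp1 K p u = a \<and> comp1 K q u = c \<and> rw K l u = \<theta>)) \<and>
     (\<forall>X u v \<alpha> \<beta>. arr1 K u X P \<and> arr1 K v X P \<and>
        cell2 K \<alpha> (comp1 K p u) (comp1 K p v) \<and> cell2 K \<beta> (comp1 K q u) (comp1 K q v) \<and>
        vcomp K (lw K g \<beta>) (rw K l u) = vcomp K (rw K l v) (lw K f \<alpha>) \<longrightarrow>
        (\<exists>!\<gamma>. cell2 K \<gamma> u v \<and> lw K p \<gamma> = \<alpha> \<and> lw K q \<gamma> = \<beta>))"

definition is_pullback ::
  "('o,'a,'c,'x) two_cat_scheme \<Rightarrow> 'a \<Rightarrow> 'a \<Rightarrow> 'o \<Rightarrow> 'a \<Rightarrow> 'a \<Rightarrow> bool" where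
  "is_pullback K f g P p q \<longleftrightarrow>
     cod1 K f = cod1 K g \<and>
     arr1 K p P (dom1 K f) \<and> arr1 K q P (dom1 K g) \<and>
     comp1 K f p = comp1 K g q \<and>
     (\<forall>X a c. arr1 K a X (dom1 K f) \<and> arr1 K c X (dom1 K g) \<and>
        comp1 K f a = comp1 K g c \<longrightarrow>
        (\<exists>!u. arr1 K u X P \<and> comp1 K p u = a \<and> comp1 K q u = c)) \<and>
     (\<forall>X u v \<alpha> \<beta>. arr1 K u X P \<and> arr1 K v X P \<and>
        cell2 K \<alpha> (comp1 K p u) (comp1 K p v) \<and> cell2 K \<beta> (comp1 K q u) (comp1 K q v) \<and>
        lw K f \<alpha> = lw K g \<beta> \<longrightarrow>
        (\<exists>!\<gamma>. cell2 K \<gamma> u v \<and> lw K p \<gamma> = \<alpha> \<and> lw K q \<gamma> = \<beta>))"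

definition is_terminal :: "('o,'a,'c,'x) two_cat_scheme \<Rightarrow> 'o \<Rightarrow> bool" where
  "is_terminal K T \<longleftrightarrow>
     (\<forall>X. \<exists>!t. arr1 K t X T) \<and>
     (\<forall>\<alpha>. cod1 K (src2 K \<alpha>) = T \<longrightarrow> \<alpha> = id2 K (src2 K \<alpha>))"

text \<open>Finite completeness of a 2-category (finite weighted limits), via the
standard characterisation: a terminal object, pullbacks and comma objects.\<close>
definition finitely_complete :: "('o,'a,'c,'x) two_cat_scheme \<Rightarrow> bool" where
  "finitely_complete K \<longleftrightarrow>
     (\<exists>T. is_terminal K T) \<and>
     (\<forall>f g. cod1 K f = cod1 K g \<longrightarrow> (\<exists>P p q. is_pullback K f g P p q)) \<and>
     (\<forall>f g. cod1 K f = cod1 K g \<longrightarrow> (\<exists>P p q l. is_lax_pullback K f g P p q l))"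

text \<open>phi : f \<Rightarrow> h g exhibits h as a left extension of f along g
(f : A \<rightarrow> C, g : A \<rightarrow> B, h : B \<rightarrow> C).\<close>
definition left_ext ::
  "('o,'a,'c,'x) two_cat_scheme \<Rightarrow> 'c \<Rightarrow> 'a \<Rightarrow> 'a \<Rightarrow> 'a \<Rightarrow> bool" where
  "left_ext K \<phi> f g h \<longleftrightarrow>
     dom1 K g = dom1 K f \<and> arr1 K h (cod1 K g) (cod1 K f) \<and>
     cell2 K \<phi> f (comp1 K h g) \<and>
     (\<forall>k. arr1 K k (cod1 K g) (cod1 K f) \<longrightarrow>
        bij_betw (\<lambda>\<kappa>. vcomp K (rw K \<kappa> g) \<phi>)
                 {\<kappa>. cell2 K \<kappa> h k} {\<sigma>. cell2 K \<sigma> f (comp1 K k g)})"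

text \<open>phi : f \<Rightarrow> h g exhibits g as a left lifting of f along h
(f : A \<rightarrow> C, g : A \<rightarrow> B, h : B \<rightarrow> C).\<close>
definition left_lift ::
  "('o,'a,'c,'x) two_cat_scheme \<Rightarrow> 'c \<Rightarrow> 'a \<Rightarrow> 'a \<Rightarrow> 'a \<Rightarrow> bool" where
  "left_lift K \<phi> f g h \<longleftrightarrow>
     dom1 K g = dom1 K f \<and> arr1 K h (cod1 K g) (cod1 K f) \<and>
     cell2 K \<phi> f (comp1 K h g) \<and>
     (\<forall>k. arr1 K k (dom1 K f) (cod1 K g) \<longrightarrow>
        bij_betw (\<lambda>\<kappa>. vcomp K (lw K h \<kappa>) \<phi>)
                 {\<kappa>. cell2 K \<kappa> g k} {\<sigma>. cell2 K \<sigma> f (comp1 K h k)})"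

definition abs_left_lift ::
  "('o,'a,'c,'x) two_cat_scheme \<Rightarrow> 'c \<Rightarrow> 'a \<Rightarrow> 'a \<Rightarrow> 'a \<Rightarrow> bool" where
  "abs_left_lift K \<phi> f g h \<longleftrightarrow>
     left_lift K \<phi> f g h \<and>
     (\<forall>D j. arr1 K j D (dom1 K f) \<longrightarrow>
        left_lift K (rw K \<phi> j) (comp1 K f j) (comp1 K g j) h)"

definition pointwise_left_ext ::
  "('o,'a,'c,'x) two_cat_scheme \<Rightarrow> 'c \<Rightarrow> 'a \<Rightarrow> 'a \<Rightarrow> 'a \<Rightarrow> bool" where
  "pointwise_left_ext K \<phi> f g h \<longleftrightarrow>
     dom1 K g = dom1 K f \<and> arr1 K h (cod1 K g) (cod1 K f) \<and>
     cell2 K \<phi> f (comp1 K h g) \<and>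
     (\<forall>X c P p q l. arr1 K c X (cod1 K g) \<and> is_lax_pullback K g c P p q l \<longrightarrow>
        left_ext K (vcomp K (lw K h l) (rw K \<phi> p)) (comp1 K f p) q (comp1 K h c))"

record ('o, 'a, 'c) yoneda_data =
  adm  :: "'a set"
  PSh  :: "'o \<Rightarrow> 'o"
  yon  :: "'o \<Rightarrow> 'a"
  Bhom :: "'a \<Rightarrow> 'a"        \<comment> \<open>f \<mapsto> B(f,1) : B \<rightarrow> \<P>A\<close>
  chi  :: "'a \<Rightarrow> 'c"

definition admissible_obj ::
  "('o,'a,'c,'x) two_cat_scheme \<Rightarrow> ('o,'a,'c,'y) yoneda_data_scheme \<Rightarrow> 'o \<Rightarrow> bool" where
  "admissible_obj K Y A \<longleftrightarrow> id1 K A \<in> adm Y"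

definition good_yoneda ::
  "('o,'a,'c,'x) two_cat_scheme \<Rightarrow> ('o,'a,'c,'y) yoneda_data_scheme \<Rightarrow> bool" where
  "good_yoneda K Y \<longleftrightarrow>
     (\<forall>f g. f \<in> adm Y \<and> dom1 K f = cod1 K g \<longrightarrow> comp1 K f g \<in> adm Y) \<and>
     (\<forall>A. admissible_obj K Y A \<longrightarrow> arr1 K (yon Y A) A (PSh Y A) \<and> yon Y A \<in> adm Y) \<and>
     (\<forall>f. admissible_obj K Y (dom1 K f) \<and> f \<in> adm Y \<longrightarrow>
        arr1 K (Bhom Y f) (cod1 K f) (PSh Y (dom1 K f)) \<and>
        cell2 K (chi Y f) (yon Y (dom1 K f)) (comp1 K (Bhom Y f) f) \<and>
        abs_left_lift K (chi Y f) (yon Y (dom1 K f)) f (Bhom Y f)) \<and>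
     (\<forall>f g \<psi>. admissible_obj K Y (dom1 K f) \<and> f \<in> adm Y \<and>
        abs_left_lift K \<psi> (yon Y (dom1 K f)) f g \<longrightarrow>
        pointwise_left_ext K \<psi> (yon Y (dom1 K f)) f g)"

definition small_obj ::
  "('o,'a,'c,'x) two_cat_scheme \<Rightarrow> ('o,'a,'c,'y) yoneda_data_scheme \<Rightarrow> 'o \<Rightarrow> bool" where
  "small_obj K Y C \<longleftrightarrow> admissible_obj K Y C \<and> admissible_obj K Y (PSh Y C)"

end

theory Submission
  imports Defs
begin

text \<open>Fix \<open>h : M \<rightarrow> A\<close>. Composing with the bijections given by the left extension \<open>\<lambda>\<close> and the
  left lifting \<open>\<chi>\<^sup>f p\<close>, the maps \<open>\<kappa> \<mapsto> (A(f,1)\<kappa>)\<cdot>\<eta>\<close> and \<open>\<kappa> \<mapsto> (\<kappa>q)\<cdot>\<eta>'\<close> on 2-cells \<open>k \<Rightarrow> h\<close>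
  become, by the defining equation of \<open>\<eta>'\<close>, one and the same map into the 2-cells
  \<open>y\<^sub>C p \<Rightarrow> A(f,1) h q\<close>; so one is bijective iff the other is, which is (1). That \<open>\<lambda>\<close> is a left
  extension at all is axiom (ii) for the identity 2-cell of \<open>y\<^sub>C\<close>, which exhibits \<open>y\<^sub>C\<close> as an
  absolute left lifting of itself through the identity of \<open>\<P>C\<close>, evaluated at \<open>i\<close>.
  For (2), restricting \<open>\<eta>\<close> along \<open>c : X \<rightarrow> M\<close> corresponds in the same way to pasting \<open>\<eta>'\<close> with
  the lax pullback square of \<open>q\<close> and \<open>c\<close>. The pasted \<open>\<lambda>\<close> is still a left extension, because the
  pasted lax pullback square is a reflection of the lax pullback of \<open>y\<^sub>C\<close> and \<open>i c\<close>, and left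
  extensions restrict along reflections.\<close>

locale strict_two_category =
  fixes K :: "('o,'a,'c,'x) two_cat_scheme"
  assumes dom_id1 [simp]: "dom1 K (id1 K X) = X"
    and cod_id1 [simp]: "cod1 K (id1 K X) = X"
    and dom_comp1 [simp]: "dom1 K f = cod1 K g \<Longrightarrow> dom1 K (comp1 K f g) = dom1 K g"
    and cod_comp1 [simp]: "dom1 K f = cod1 K g \<Longrightarrow> cod1 K (comp1 K f g) = cod1 K f"
    and comp1_assoc:
      "dom1 K f = cod1 K g \<Longrightarrow> dom1 K g = cod1 K h \<Longrightarrow>
        comp1 K (comp1 K f g) h = comp1 K f (comp1 K g h)"
    and comp1_id1_right [simp]: "dom1 K f = X \<Longrightarrow> comp1 K f (id1 K X) = f"
    and comp1_id1_left [simp]: "cod1 K f = X \<Longrightarrow> comp1 K (id1 K X) f = f"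
    and dom_tgt2 [simp]: "dom1 K (tgt2 K \<alpha>) = dom1 K (src2 K \<alpha>)"
    and cod_tgt2 [simp]: "cod1 K (tgt2 K \<alpha>) = cod1 K (src2 K \<alpha>)"
    and src_id2 [simp]: "src2 K (id2 K f) = f"
    and tgt_id2 [simp]: "tgt2 K (id2 K f) = f"
    and src_vcomp [simp]: "tgt2 K \<alpha> = src2 K \<beta> \<Longrightarrow> src2 K (vcomp K \<beta> \<alpha>) = src2 K \<alpha>"
    and tgt_vcomp [simp]: "tgt2 K \<alpha> = src2 K \<beta> \<Longrightarrow> tgt2 K (vcomp K \<beta> \<alpha>) = tgt2 K \<beta>"
    and vcomp_assoc:
      "tgt2 K \<alpha> = src2 K \<beta> \<Longrightarrow> tgt2 K \<beta> = src2 K \<gamma> \<Longrightarrow>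
        vcomp K (vcomp K \<gamma> \<beta>) \<alpha> = vcomp K \<gamma> (vcomp K \<beta> \<alpha>)"
    and vcomp_id2_right [simp]: "src2 K \<alpha> = f \<Longrightarrow> vcomp K \<alpha> (id2 K f) = \<alpha>"
    and vcomp_id2_left [simp]: "tgt2 K \<alpha> = f \<Longrightarrow> vcomp K (id2 K f) \<alpha> = \<alpha>"
    and src_hcomp:
      "dom1 K (src2 K \<beta>) = cod1 K (src2 K \<alpha>) \<Longrightarrow>
        src2 K (hcomp K \<beta> \<alpha>) = comp1 K (src2 K \<beta>) (src2 K \<alpha>)"
    and tgt_hcomp:
      "dom1 K (src2 K \<beta>) = cod1 K (src2 K \<alpha>) \<Longrightarrow>
        tgt2 K (hcomp K \<beta> \<alpha>) = comp1 K (tgt2 K \<beta>) (tgt2 K \<alpha>)"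
    and hcomp_assoc:
      "dom1 K (src2 K \<gamma>) = cod1 K (src2 K \<beta>) \<Longrightarrow> dom1 K (src2 K \<beta>) = cod1 K (src2 K \<alpha>) \<Longrightarrow>
        hcomp K (hcomp K \<gamma> \<beta>) \<alpha> = hcomp K \<gamma> (hcomp K \<beta> \<alpha>)"
    and hcomp_id1_right: "dom1 K (src2 K \<alpha>) = X \<Longrightarrow> hcomp K \<alpha> (id2 K (id1 K X)) = \<alpha>"
    and hcomp_id1_left: "cod1 K (src2 K \<alpha>) = X \<Longrightarrow> hcomp K (id2 K (id1 K X)) \<alpha> = \<alpha>"
    and hcomp_id2: "dom1 K g = cod1 K f \<Longrightarrow> hcomp K (id2 K g) (id2 K f) = id2 K (comp1 K g f)"
    and interchange:
      "tgt2 K \<alpha> = src2 K \<alpha>' \<Longrightarrow> tgt2 K \<beta> = src2 K \<beta>' \<Longrightarrow> dom1 K (src2 K \<beta>) = cod1 K (src2 K \<alpha>) \<Longrightarrow>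
        hcomp K (vcomp K \<beta>' \<beta>) (vcomp K \<alpha>' \<alpha>) = vcomp K (hcomp K \<beta>' \<alpha>') (hcomp K \<beta> \<alpha>)"

lemma strict_two_categoryI:
  "two_category K \<Longrightarrow> strict_two_category K"
  unfolding two_category_def arr1_def cell2_def by unfold_locales (meson | metis)+

context strict_two_category
begin

lemma src_lw [simp]: "dom1 K h = cod1 K (src2 K \<alpha>) \<Longrightarrow> src2 K (lw K h \<alpha>) = comp1 K h (src2 K \<alpha>)"
  unfolding lw_def by (simp add: src_hcomp)

lemma tgt_lw [simp]: "dom1 K h = cod1 K (src2 K \<alpha>) \<Longrightarrow> tgt2 K (lw K h \<alpha>) = comp1 K h (tgt2 K \<alpha>)"
  unfolding lw_def by (simp add: tgt_hcomp)

lemma src_rw [simp]: "dom1 K (src2 K \<alpha>) = cod1 K j \<Longrightarrow> src2 K (rw K \<alpha> j) = comp1 K (src2 K \<alpha>) j"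
  unfolding rw_def by (simp add: src_hcomp)

lemma tgt_rw [simp]: "dom1 K (src2 K \<alpha>) = cod1 K j \<Longrightarrow> tgt2 K (rw K \<alpha> j) = comp1 K (tgt2 K \<alpha>) j"
  unfolding rw_def by (simp add: tgt_hcomp)

lemma lw_vcomp:
  "dom1 K h = cod1 K (src2 K \<alpha>) \<Longrightarrow> tgt2 K \<alpha> = src2 K \<beta> \<Longrightarrow>
    lw K h (vcomp K \<beta> \<alpha>) = vcomp K (lw K h \<beta>) (lw K h \<alpha>)"
  unfolding lw_def using interchange[of \<alpha> \<beta> "id2 K h" "id2 K h"] by simp

lemma rw_vcomp:
  "dom1 K (src2 K \<alpha>) = cod1 K j \<Longrightarrow> tgt2 K \<alpha> = src2 K \<beta> \<Longrightarrow>
    rw K (vcomp K \<beta> \<alpha>) j = vcomp K (rw K \<beta> j) (rw K \<alpha> j)"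
  unfolding rw_def using interchange[of "id2 K j" "id2 K j" \<alpha> \<beta>] by simp

lemma lw_lw:
  "dom1 K h = cod1 K g \<Longrightarrow> dom1 K g = cod1 K (src2 K \<alpha>) \<Longrightarrow>
    lw K h (lw K g \<alpha>) = lw K (comp1 K h g) \<alpha>"
  unfolding lw_def using hcomp_assoc[of "id2 K h" "id2 K g" \<alpha>] by (simp add: hcomp_id2)

lemma rw_rw:
  "dom1 K (src2 K \<alpha>) = cod1 K j \<Longrightarrow> dom1 K j = cod1 K j' \<Longrightarrow>
    rw K (rw K \<alpha> j) j' = rw K \<alpha> (comp1 K j j')"
  unfolding rw_def using hcomp_assoc[of \<alpha> "id2 K j" "id2 K j'"] by (simp add: hcomp_id2)

lemma rw_lw:
  "dom1 K h = cod1 K (src2 K \<alpha>) \<Longrightarrow> dom1 K (src2 K \<alpha>) = cod1 K j \<Longrightarrow>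
    rw K (lw K h \<alpha>) j = lw K h (rw K \<alpha> j)"
  unfolding rw_def lw_def using hcomp_assoc[of "id2 K h" \<alpha> "id2 K j"] by simp

lemma lw_id2 [simp]: "dom1 K h = cod1 K f \<Longrightarrow> lw K h (id2 K f) = id2 K (comp1 K h f)"
  unfolding lw_def by (simp add: hcomp_id2)

lemma rw_id2 [simp]: "dom1 K f = cod1 K j \<Longrightarrow> rw K (id2 K f) j = id2 K (comp1 K f j)"
  unfolding rw_def by (simp add: hcomp_id2)

lemma lw_id1 [simp]: "cod1 K (src2 K \<alpha>) = X \<Longrightarrow> lw K (id1 K X) \<alpha> = \<alpha>"
  unfolding lw_def by (rule hcomp_id1_left)

lemma rw_id1 [simp]: "dom1 K (src2 K \<alpha>) = X \<Longrightarrow> rw K \<alpha> (id1 K X) = \<alpha>"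
  unfolding rw_def by (rule hcomp_id1_right)

lemma whisker_exchange:
  assumes "dom1 K (src2 K \<alpha>) = cod1 K (src2 K \<beta>)"
  shows "vcomp K (lw K (tgt2 K \<alpha>) \<beta>) (rw K \<alpha> (src2 K \<beta>)) =
         vcomp K (rw K \<alpha> (tgt2 K \<beta>)) (lw K (src2 K \<alpha>) \<beta>)"
proof -
  have "vcomp K (lw K (tgt2 K \<alpha>) \<beta>) (rw K \<alpha> (src2 K \<beta>)) =
        hcomp K (vcomp K (id2 K (tgt2 K \<alpha>)) \<alpha>) (vcomp K \<beta> (id2 K (src2 K \<beta>)))"
    unfolding lw_def rw_def using assms by (subst interchange) auto
  also have "\<dots> = hcomp K (vcomp K \<alpha> (id2 K (src2 K \<alpha>))) (vcomp K (id2 K (tgt2 K \<beta>)) \<beta>)"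
    by simp
  also have "\<dots> = vcomp K (rw K \<alpha> (tgt2 K \<beta>)) (lw K (src2 K \<alpha>) \<beta>)"
    unfolding lw_def rw_def using assms by (subst interchange) auto
  finally show ?thesis .
qed

section \<open>Left extensions and left liftings\<close>

lemma left_extD:
  "left_ext K \<phi> f g h \<Longrightarrow>
    dom1 K g = dom1 K f \<and> arr1 K h (cod1 K g) (cod1 K f) \<and> cell2 K \<phi> f (comp1 K h g)"
  unfolding left_ext_def by blast

lemma left_ext_bij:
  "left_ext K \<phi> f g h \<Longrightarrow> arr1 K k (cod1 K g) (cod1 K f) \<Longrightarrow>
    bij_betw (\<lambda>\<kappa>. vcomp K (rw K \<kappa> g) \<phi>) {\<kappa>. cell2 K \<kappa> h k} {\<sigma>. cell2 K \<sigma> f (comp1 K k g)}"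
  unfolding left_ext_def by blast

lemma left_liftD:
  "left_lift K \<phi> f g h \<Longrightarrow>
    dom1 K g = dom1 K f \<and> arr1 K h (cod1 K g) (cod1 K f) \<and> cell2 K \<phi> f (comp1 K h g)"
  unfolding left_lift_def by blast

lemma left_lift_bij:
  "left_lift K \<phi> f g h \<Longrightarrow> arr1 K k (dom1 K f) (cod1 K g) \<Longrightarrow>
    bij_betw (\<lambda>\<kappa>. vcomp K (lw K h \<kappa>) \<phi>) {\<kappa>. cell2 K \<kappa> g k} {\<sigma>. cell2 K \<sigma> f (comp1 K h k)}"
  unfolding left_lift_def by blast

lemma mate_transposes_bij_iff:
  assumes \<theta>: "left_ext K \<theta> F b i"
    and \<psi>: "left_lift K \<psi> F g B"
    and k: "arr1 K k (cod1 K b) (cod1 K g)"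
    and \<eta>: "cell2 K \<eta> i (comp1 K B k)"
    and \<eta>': "cell2 K \<eta>' g (comp1 K k b)"
    and mate: "vcomp K (lw K B \<eta>') \<psi> = vcomp K (rw K \<eta> b) \<theta>"
    and h: "arr1 K h (cod1 K b) (cod1 K g)"
  shows "bij_betw (\<lambda>\<kappa>. vcomp K (lw K B \<kappa>) \<eta>) {\<kappa>. cell2 K \<kappa> k h}
        {\<sigma>. cell2 K \<sigma> i (comp1 K B h)} \<longleftrightarrow>
    bij_betw (\<lambda>\<kappa>. vcomp K (rw K \<kappa> b) \<eta>') {\<kappa>. cell2 K \<kappa> k h}
        {\<sigma>. cell2 K \<sigma> g (comp1 K h b)}"
proof -
  let ?lift = "\<lambda>\<kappa>. vcomp K (lw K B \<kappa>) \<eta>"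
  let ?ext = "\<lambda>\<kappa>. vcomp K (rw K \<kappa> b) \<eta>'"
  let ?via_\<theta> = "\<lambda>\<tau>. vcomp K (rw K \<tau> b) \<theta>"
  let ?via_\<psi> = "\<lambda>\<sigma>. vcomp K (lw K B \<sigma>) \<psi>"
  let ?target = "{\<sigma>. cell2 K \<sigma> F (comp1 K (comp1 K B h) b)}"
  let ?cells_\<kappa> = "{\<kappa>. cell2 K \<kappa> k h}"
  note typing = left_extD[OF \<theta>, unfolded arr1_def cell2_def]
    left_liftD[OF \<psi>, unfolded arr1_def cell2_def]
    k[unfolded arr1_def] \<eta>[unfolded cell2_def] \<eta>'[unfolded cell2_def] h[unfolded arr1_def]
  have via_\<theta>: "bij_betw ?via_\<theta> {\<sigma>. cell2 K \<sigma> i (comp1 K B h)} ?target"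
    using left_ext_bij[OF \<theta>, of "comp1 K B h"] typing by (simp add: arr1_def)
  have via_\<psi>: "bij_betw ?via_\<psi> {\<sigma>. cell2 K \<sigma> g (comp1 K h b)} ?target"
    using left_lift_bij[OF \<psi>, of "comp1 K h b"] typing by (simp add: arr1_def comp1_assoc)
  have lift_into: "?lift ` ?cells_\<kappa> \<subseteq> {\<sigma>. cell2 K \<sigma> i (comp1 K B h)}"
    and ext_into: "?ext ` ?cells_\<kappa> \<subseteq> {\<sigma>. cell2 K \<sigma> g (comp1 K h b)}"
    using typing by (auto simp: cell2_def)
  have square: "?via_\<theta> (?lift \<kappa>) = ?via_\<psi> (?ext \<kappa>)" if "\<kappa> \<in> ?cells_\<kappa>" for \<kappa>
  proof -
    note typing_\<kappa> = typing that[unfolded mem_Collect_eq cell2_def]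
    have "?via_\<theta> (?lift \<kappa>) = vcomp K (lw K B (rw K \<kappa> b)) (vcomp K (rw K \<eta> b) \<theta>)"
      using typing_\<kappa> by (simp add: rw_vcomp vcomp_assoc rw_lw comp1_assoc)
    also have "\<dots> = vcomp K (lw K B (rw K \<kappa> b)) (vcomp K (lw K B \<eta>') \<psi>)"
      by (simp add: mate)
    also have "\<dots> = ?via_\<psi> (?ext \<kappa>)"
      using typing_\<kappa> by (simp add: lw_vcomp vcomp_assoc comp1_assoc)
    finally show ?thesis .
  qed
  have "bij_betw ?lift ?cells_\<kappa> {\<sigma>. cell2 K \<sigma> i (comp1 K B h)} \<longleftrightarrow>
        bij_betw (?via_\<theta> \<circ> ?lift) ?cells_\<kappa> ?target"
    by (rule bij_betw_comp_iff2[OF via_\<theta> lift_into])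
  also have "\<dots> \<longleftrightarrow> bij_betw (?via_\<psi> \<circ> ?ext) ?cells_\<kappa> ?target"
    by (rule bij_betw_cong) (simp add: square)
  also have "\<dots> \<longleftrightarrow> bij_betw ?ext ?cells_\<kappa> {\<sigma>. cell2 K \<sigma> g (comp1 K h b)}"
    by (rule bij_betw_comp_iff2[OF via_\<psi> ext_into, symmetric])
  finally show ?thesis .
qed

lemma left_lift_iff_left_ext:
  assumes \<theta>: "left_ext K \<theta> F b i"
    and \<psi>: "left_lift K \<psi> F g B"
    and k: "arr1 K k (cod1 K b) (cod1 K g)"
    and \<eta>: "cell2 K \<eta> i (comp1 K B k)"
    and \<eta>': "cell2 K \<eta>' g (comp1 K k b)"
    and mate: "vcomp K (lw K B \<eta>') \<psi> = vcomp K (rw K \<eta> b) \<theta>"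
  shows "left_lift K \<eta> i k B \<longleftrightarrow> left_ext K \<eta>' g b k"
  using left_extD[OF \<theta>] left_liftD[OF \<psi>] k \<eta> \<eta>' mate_transposes_bij_iff[OF \<theta> \<psi> k \<eta> \<eta>' mate]
  unfolding left_lift_def left_ext_def by (auto simp: arr1_def cell2_def)

lemma bij_betw_rw_reflection:
  assumes u: "arr1 K u Z L" and w: "arr1 K w L Z"
    and retraction: "comp1 K u w = id1 K L"
    and \<epsilon>: "cell2 K \<epsilon> (id1 K Z) (comp1 K w u)"
    and F: "dom1 K F = L" and T: "arr1 K T L (cod1 K F)"
    and F\<epsilon>: "lw K (comp1 K F u) \<epsilon> = id2 K (comp1 K F u)"
    and T\<epsilon>: "lw K (comp1 K T u) \<epsilon> = id2 K (comp1 K T u)"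
  shows "bij_betw (\<lambda>\<alpha>. rw K \<alpha> u) {\<alpha>. cell2 K \<alpha> F T}
           {\<alpha>. cell2 K \<alpha> (comp1 K F u) (comp1 K T u)}"
proof (rule bij_betw_byWitness[where f' = "\<lambda>\<alpha>. rw K \<alpha> w"])
  note typing = u[unfolded arr1_def] w[unfolded arr1_def] \<epsilon>[unfolded cell2_def] F
    T[unfolded arr1_def]
  have cancel: "comp1 K (comp1 K S u) (comp1 K w u) = comp1 K S u" if "dom1 K S = L" for S
  proof -
    have "comp1 K (comp1 K S u) (comp1 K w u) = comp1 K S (comp1 K (comp1 K u w) u)"
      using typing that by (simp add: comp1_assoc)
    then show ?thesis
      using typing that by (simp add: retraction)
  qed
  show "\<forall>\<alpha>\<in>{\<alpha>. cell2 K \<alpha> F T}. rw K (rw K \<alpha> u) w = \<alpha>"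
    using typing by (auto simp: cell2_def rw_rw retraction)
  show "\<forall>\<alpha>\<in>{\<alpha>. cell2 K \<alpha> (comp1 K F u) (comp1 K T u)}. rw K (rw K \<alpha> w) u = \<alpha>"
  proof
    fix \<alpha> assume "\<alpha> \<in> {\<alpha>. cell2 K \<alpha> (comp1 K F u) (comp1 K T u)}"
    then have \<alpha>: "src2 K \<alpha> = comp1 K F u" "tgt2 K \<alpha> = comp1 K T u"
      by (auto simp: cell2_def)
    have "rw K (rw K \<alpha> w) u = vcomp K (rw K \<alpha> (comp1 K w u)) (lw K (comp1 K F u) \<epsilon>)"
      using typing \<alpha> F\<epsilon> cancel by (simp add: rw_rw)
    also have "\<dots> = vcomp K (lw K (comp1 K T u) \<epsilon>) (rw K \<alpha> (id1 K Z))"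
      using whisker_exchange[of \<alpha> \<epsilon>] typing \<alpha> cancel by simp
    also have "\<dots> = \<alpha>"
      using typing \<alpha> T\<epsilon> by simp
    finally show "rw K (rw K \<alpha> w) u = \<alpha>" .
  qed
  show "(\<lambda>\<alpha>. rw K \<alpha> u) ` {\<alpha>. cell2 K \<alpha> F T} \<subseteq> {\<alpha>. cell2 K \<alpha> (comp1 K F u) (comp1 K T u)}"
    using typing by (auto simp: cell2_def)
  show "(\<lambda>\<alpha>. rw K \<alpha> w) ` {\<alpha>. cell2 K \<alpha> (comp1 K F u) (comp1 K T u)} \<subseteq> {\<alpha>. cell2 K \<alpha> F T}"
    using typing by (auto simp: cell2_def comp1_assoc retraction)
qed

lemma left_ext_restrict_reflection:
  assumes \<phi>: "left_ext K \<phi> F G H"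
    and u: "arr1 K u Z (dom1 K G)" and w: "arr1 K w (dom1 K G) Z"
    and retraction: "comp1 K u w = id1 K (dom1 K G)"
    and \<epsilon>: "cell2 K \<epsilon> (id1 K Z) (comp1 K w u)"
    and F\<epsilon>: "lw K (comp1 K F u) \<epsilon> = id2 K (comp1 K F u)"
    and G\<epsilon>: "lw K (comp1 K G u) \<epsilon> = id2 K (comp1 K G u)"
  shows "left_ext K (rw K \<phi> u) (comp1 K F u) (comp1 K G u) H"
proof -
  note typing = left_extD[OF \<phi>, unfolded arr1_def cell2_def] u[unfolded arr1_def]
    w[unfolded arr1_def]
  have "bij_betw (\<lambda>\<kappa>. vcomp K (rw K \<kappa> (comp1 K G u)) (rw K \<phi> u))
          {\<kappa>. cell2 K \<kappa> H h} {\<sigma>. cell2 K \<sigma> (comp1 K F u) (comp1 K h (comp1 K G u))}"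
    if h: "arr1 K h (cod1 K G) (cod1 K F)" for h
  proof -
    note typing_h = typing h[unfolded arr1_def]
    have "bij_betw (\<lambda>\<kappa>. vcomp K (rw K \<kappa> G) \<phi>) {\<kappa>. cell2 K \<kappa> H h} {\<tau>. cell2 K \<tau> F (comp1 K h G)}"
      using \<phi> h by (rule left_ext_bij)
    moreover have "bij_betw (\<lambda>\<tau>. rw K \<tau> u) {\<tau>. cell2 K \<tau> F (comp1 K h G)}
        {\<sigma>. cell2 K \<sigma> (comp1 K F u) (comp1 K h (comp1 K G u))}"
    proof -
      have "lw K (comp1 K (comp1 K h G) u) \<epsilon> = lw K h (lw K (comp1 K G u) \<epsilon>)"
        using typing_h \<epsilon> by (simp add: cell2_def lw_lw comp1_assoc)
      then have hG\<epsilon>: "lw K (comp1 K (comp1 K h G) u) \<epsilon> = id2 K (comp1 K (comp1 K h G) u)"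
        using typing_h G\<epsilon> by (simp add: comp1_assoc)
      have "bij_betw (\<lambda>\<tau>. rw K \<tau> u) {\<tau>. cell2 K \<tau> F (comp1 K h G)}
          {\<sigma>. cell2 K \<sigma> (comp1 K F u) (comp1 K (comp1 K h G) u)}"
        by (rule bij_betw_rw_reflection[OF u w retraction \<epsilon> _ _ F\<epsilon> hG\<epsilon>])
          (use typing_h in \<open>auto simp: arr1_def\<close>)
      then show ?thesis
        using typing_h by (simp add: comp1_assoc)
    qed
    ultimately have "bij_betw ((\<lambda>\<tau>. rw K \<tau> u) \<circ> (\<lambda>\<kappa>. vcomp K (rw K \<kappa> G) \<phi>))
        {\<kappa>. cell2 K \<kappa> H h} {\<sigma>. cell2 K \<sigma> (comp1 K F u) (comp1 K h (comp1 K G u))}"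
      by (rule bij_betw_trans)
    moreover have "bij_betw ((\<lambda>\<tau>. rw K \<tau> u) \<circ> (\<lambda>\<kappa>. vcomp K (rw K \<kappa> G) \<phi>)) {\<kappa>. cell2 K \<kappa> H h} T
      \<longleftrightarrow> bij_betw (\<lambda>\<kappa>. vcomp K (rw K \<kappa> (comp1 K G u)) (rw K \<phi> u)) {\<kappa>. cell2 K \<kappa> H h} T" for T
      by (rule bij_betw_cong) (use typing_h in \<open>simp add: cell2_def rw_vcomp rw_rw\<close>)
    ultimately show ?thesis
      by blast
  qed
  then show ?thesis
    using typing unfolding left_ext_def by (simp add: arr1_def cell2_def comp1_assoc)
qed

lemma left_lift_id2:
  assumes "arr1 K g D X"
  shows "left_lift K (id2 K g) g g (id1 K X)"
proof -
  have "bij_betw (\<lambda>\<kappa>. vcomp K (lw K (id1 K X) \<kappa>) (id2 K g)) {\<kappa>. cell2 K \<kappa> g k} {\<kappa>. cell2 K \<kappa> g k}"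
    for k
    by (rule bij_betw_cong[THEN iffD2, OF _ bij_betw_id])
      (use assms in \<open>auto simp: arr1_def cell2_def\<close>)
  then show ?thesis
    using assms unfolding left_lift_def by (simp add: arr1_def cell2_def)
qed

lemma abs_left_lift_id2:
  assumes g: "arr1 K g D X"
  shows "abs_left_lift K (id2 K g) g g (id1 K X)"
  unfolding abs_left_lift_def
proof (intro conjI allI impI)
  show "left_lift K (id2 K g) g g (id1 K X)"
    by (rule left_lift_id2[OF g])
  fix D' j
  assume j: "arr1 K j D' (dom1 K g)"
  have "left_lift K (id2 K (comp1 K g j)) (comp1 K g j) (comp1 K g j) (id1 K X)"
    by (rule left_lift_id2) (use g j in \<open>simp add: arr1_def\<close>)
  then show "left_lift K (rw K (id2 K g) j) (comp1 K g j) (comp1 K g j) (id1 K X)"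
    using g j by (simp add: arr1_def)
qed

lemma lax_pullbackD:
  assumes "is_lax_pullback K f g P p q l"
  shows "cod1 K f = cod1 K g" "dom1 K p = P" "cod1 K p = dom1 K f" "dom1 K q = P"
    "cod1 K q = dom1 K g" "src2 K l = comp1 K f p" "tgt2 K l = comp1 K g q"
  using assms unfolding is_lax_pullback_def arr1_def cell2_def by auto

lemma lax_pullback_factor:
  assumes "is_lax_pullback K f g P p q l"
    and "arr1 K a X (dom1 K f)" "arr1 K c X (dom1 K g)" "cell2 K \<theta> (comp1 K f a) (comp1 K g c)"
  obtains u where "arr1 K u X P" "comp1 K p u = a" "comp1 K q u = c" "rw K l u = \<theta>"
  using assms unfolding is_lax_pullback_def by blast

lemma lax_pullback_factor_unique:
  assumes lp: "is_lax_pullback K f g P p q l"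
    and u: "arr1 K u X P" and v: "arr1 K v X P"
    and "comp1 K p u = comp1 K p v" "comp1 K q u = comp1 K q v" "rw K l u = rw K l v"
  shows "u = v"
proof -
  note typing = lax_pullbackD[OF lp] u[unfolded arr1_def]
  have "arr1 K (comp1 K p u) X (dom1 K f)" "arr1 K (comp1 K q u) X (dom1 K g)"
    "cell2 K (rw K l u) (comp1 K f (comp1 K p u)) (comp1 K g (comp1 K q u))"
    using typing by (simp_all add: arr1_def cell2_def comp1_assoc)
  then have "\<exists>!w. arr1 K w X P \<and> comp1 K p w = comp1 K p u \<and> comp1 K q w = comp1 K q u \<and>
      rw K l w = rw K l u"
    using lp unfolding is_lax_pullback_def by blast
  then show ?thesis
    using assms(2-) by metis
qed

lemma lax_pullback_2cell:
  assumes "is_lax_pullback K f g P p q l"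
    and "arr1 K u X P" "arr1 K v X P"
    and "cell2 K \<alpha> (comp1 K p u) (comp1 K p v)" "cell2 K \<beta> (comp1 K q u) (comp1 K q v)"
    and "vcomp K (lw K g \<beta>) (rw K l u) = vcomp K (rw K l v) (lw K f \<alpha>)"
  obtains \<gamma> where "cell2 K \<gamma> u v" "lw K p \<gamma> = \<alpha>" "lw K q \<gamma> = \<beta>"
  using assms unfolding is_lax_pullback_def by blast

lemma mate_paste:
  assumes arrs: "arr1 K B A P" "arr1 K g Z A" "arr1 K b Z X" "arr1 K i X P" "arr1 K k X A"
      "arr1 K p' W Z" "arr1 K c V X" "arr1 K q' W V"
    and \<psi>: "cell2 K \<psi> F (comp1 K B g)" and \<theta>: "cell2 K \<theta> F (comp1 K i b)"
    and \<eta>: "cell2 K \<eta> i (comp1 K B k)" and \<eta>': "cell2 K \<eta>' g (comp1 K k b)"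
    and l': "cell2 K l' (comp1 K b p') (comp1 K c q')"
    and mate: "vcomp K (lw K B \<eta>') \<psi> = vcomp K (rw K \<eta> b) \<theta>"
  shows "vcomp K (lw K B (vcomp K (lw K k l') (rw K \<eta>' p'))) (rw K \<psi> p') =
         vcomp K (rw K (rw K \<eta> c) q') (vcomp K (lw K i l') (rw K \<theta> p'))"
proof -
  have "dom1 K F = dom1 K (comp1 K B g)"
    using dom_tgt2[of \<psi>] \<psi> unfolding cell2_def by simp
  note typing = arrs[unfolded arr1_def] this \<psi>[unfolded cell2_def] \<theta>[unfolded cell2_def]
    \<eta>[unfolded cell2_def] \<eta>'[unfolded cell2_def] l'[unfolded cell2_def]
  have "vcomp K (lw K B (vcomp K (lw K k l') (rw K \<eta>' p'))) (rw K \<psi> p') =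
        vcomp K (lw K B (lw K k l')) (rw K (vcomp K (lw K B \<eta>') \<psi>) p')"
    using typing by (simp add: lw_vcomp rw_vcomp rw_lw vcomp_assoc comp1_assoc)
  also have "\<dots> = vcomp K (lw K B (lw K k l')) (rw K (vcomp K (rw K \<eta> b) \<theta>) p')"
    by (simp only: mate)
  also have "\<dots> = vcomp K (vcomp K (lw K (comp1 K B k) l') (rw K \<eta> (comp1 K b p'))) (rw K \<theta> p')"
    using typing by (simp add: rw_vcomp lw_lw rw_rw vcomp_assoc comp1_assoc)
  also have "vcomp K (lw K (comp1 K B k) l') (rw K \<eta> (comp1 K b p')) =
      vcomp K (rw K \<eta> (comp1 K c q')) (lw K i l')"
    using whisker_exchange[of \<eta> l'] typing by simp
  also have "vcomp K (vcomp K (rw K \<eta> (comp1 K c q')) (lw K i l')) (rw K \<theta> p') =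
      vcomp K (rw K (rw K \<eta> c) q') (vcomp K (lw K i l') (rw K \<theta> p'))"
    using typing by (simp add: rw_rw vcomp_assoc comp1_assoc)
  finally show ?thesis .
qed

lemma abs_left_lift_iff_pointwise_left_ext:
  assumes complete: "finitely_complete K"
    and arrs: "arr1 K q L M" "arr1 K g L A" "arr1 K k M A" "arr1 K i M P"
    and \<eta>: "cell2 K \<eta> i (comp1 K B k)" and \<eta>': "cell2 K \<eta>' g (comp1 K k q)"
    and restrict: "\<And>X c P' p' q' l'. arr1 K c X M \<Longrightarrow> is_lax_pullback K q c P' p' q' l' \<Longrightarrow>
      left_lift K (rw K \<eta> c) (comp1 K i c) (comp1 K k c) B \<longleftrightarrow>
      left_ext K (vcomp K (lw K k l') (rw K \<eta>' p')) (comp1 K g p') q' (comp1 K k c)"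
  shows "abs_left_lift K \<eta> i k B \<longleftrightarrow> pointwise_left_ext K \<eta>' g q k"
proof
  assume abs: "abs_left_lift K \<eta> i k B"
  show "pointwise_left_ext K \<eta>' g q k"
    unfolding pointwise_left_ext_def
  proof (intro conjI allI impI)
    show "dom1 K q = dom1 K g" "arr1 K k (cod1 K q) (cod1 K g)" "cell2 K \<eta>' g (comp1 K k q)"
      using arrs \<eta>' by (simp_all add: arr1_def)
    fix X c P' p' q' l'
    assume "arr1 K c X (cod1 K q) \<and> is_lax_pullback K q c P' p' q' l'"
    moreover have "dom1 K i = cod1 K q"
      using arrs by (simp add: arr1_def)
    ultimately show "left_ext K (vcomp K (lw K k l') (rw K \<eta>' p')) (comp1 K g p') q' (comp1 K k c)"
      using abs restrict arrs unfolding abs_left_lift_def by (auto simp: arr1_def)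
  qed
next
  assume pointwise: "pointwise_left_ext K \<eta>' g q k"
  have restricted: "left_lift K (rw K \<eta> c) (comp1 K i c) (comp1 K k c) B" if c: "arr1 K c X M" for X c
  proof -
    obtain P' p' q' l' where "is_lax_pullback K q c P' p' q' l'"
      using complete c arrs unfolding finitely_complete_def arr1_def by metis
    then show ?thesis
      using pointwise c restrict arrs unfolding pointwise_left_ext_def arr1_def by auto
  qed
  have "left_lift K \<eta> i k B"
    using restricted[of "id1 K M"] arrs \<eta> by (simp add: arr1_def cell2_def)
  then show "abs_left_lift K \<eta> i k B"
    using restricted arrs unfolding abs_left_lift_def arr1_def by auto
qed

end

section \<open>Pasting lax pullbacks\<close>

text \<open>Pasting the lax pullback of \<open>q\<close> and \<open>c\<close> to the lax pullback of \<open>y\<close> and \<open>i\<close> does not give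
  the lax pullback of \<open>y\<close> and \<open>i c\<close>, but the comparison \<open>u\<close> into the latter is a reflection:
  it has a section \<open>w\<close> and a unit \<open>\<epsilon> : 1 \<Rightarrow> w u\<close> that the projections do not see.\<close>
locale lax_pullback_pasting = strict_two_category K for K :: "('o,'a,'c,'x) two_cat_scheme" +
  fixes y i c :: 'a and X L P Lc :: 'o and p q p' q' pc qc :: 'a and l l' lc :: 'c
  assumes outer: "is_lax_pullback K y i L p q l"
    and c: "arr1 K c X (dom1 K i)"
    and inner: "is_lax_pullback K q c P p' q' l'"
    and composite: "is_lax_pullback K y (comp1 K i c) Lc pc qc lc"
begin

lemma typing:
  "cod1 K y = cod1 K i" "dom1 K p = L" "cod1 K p = dom1 K y" "dom1 K q = L" "cod1 K q = dom1 K i"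
  "src2 K l = comp1 K y p" "tgt2 K l = comp1 K i q"
  "dom1 K c = X" "cod1 K c = dom1 K i"
  "dom1 K p' = P" "cod1 K p' = L" "dom1 K q' = P" "cod1 K q' = X"
  "src2 K l' = comp1 K q p'" "tgt2 K l' = comp1 K c q'"
  "dom1 K pc = Lc" "cod1 K pc = dom1 K y" "dom1 K qc = Lc" "cod1 K qc = X"
  "src2 K lc = comp1 K y pc" "tgt2 K lc = comp1 K (comp1 K i c) qc"
  using lax_pullbackD[OF outer] lax_pullbackD[OF inner] c lax_pullbackD[OF composite]
  by (simp_all add: arr1_def)

lemma comparison_arrow:
  obtains u where "arr1 K u P Lc" "comp1 K pc u = comp1 K p p'" "comp1 K qc u = q'"
    "rw K lc u = vcomp K (lw K i l') (rw K l p')"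
proof (rule lax_pullback_factor[OF composite])
  show "arr1 K (comp1 K p p') P (dom1 K y)" "arr1 K q' P (dom1 K (comp1 K i c))"
    using typing by (simp_all add: arr1_def)
  show "cell2 K (vcomp K (lw K i l') (rw K l p')) (comp1 K y (comp1 K p p'))
      (comp1 K (comp1 K i c) q')"
    using typing by (simp add: cell2_def comp1_assoc)
qed (rule that)

lemma section_arrow:
  obtains w where "arr1 K w Lc P" "comp1 K p (comp1 K p' w) = pc" "comp1 K q' w = qc"
    "rw K l (comp1 K p' w) = lc" "rw K l' w = id2 K (comp1 K c qc)"
proof -
  obtain w\<^sub>0 where w\<^sub>0: "arr1 K w\<^sub>0 Lc L" "comp1 K p w\<^sub>0 = pc" "comp1 K q w\<^sub>0 = comp1 K c qc"
      "rw K l w\<^sub>0 = lc"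
  proof (rule lax_pullback_factor[OF outer])
    show "arr1 K pc Lc (dom1 K y)" "arr1 K (comp1 K c qc) Lc (dom1 K i)"
      using typing by (simp_all add: arr1_def)
    show "cell2 K lc (comp1 K y pc) (comp1 K i (comp1 K c qc))"
      using typing by (simp add: cell2_def comp1_assoc)
  qed
  obtain w where "arr1 K w Lc P" "comp1 K p' w = w\<^sub>0" "comp1 K q' w = qc"
      "rw K l' w = id2 K (comp1 K c qc)"
  proof (rule lax_pullback_factor[OF inner])
    show "arr1 K w\<^sub>0 Lc (dom1 K q)" "arr1 K qc Lc (dom1 K c)"
      using typing w\<^sub>0 by (simp_all add: arr1_def)
    show "cell2 K (id2 K (comp1 K c qc)) (comp1 K q w\<^sub>0) (comp1 K c qc)"
      using w\<^sub>0 by (simp add: cell2_def)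
  qed
  then show ?thesis
    using that w\<^sub>0 by simp
qed

context
  fixes u w :: 'a
  assumes u: "arr1 K u P Lc" "comp1 K pc u = comp1 K p p'" "comp1 K qc u = q'"
      "rw K lc u = vcomp K (lw K i l') (rw K l p')"
    and w: "arr1 K w Lc P" "comp1 K p (comp1 K p' w) = pc" "comp1 K q' w = qc"
      "rw K l (comp1 K p' w) = lc" "rw K l' w = id2 K (comp1 K c qc)"
begin

lemma arrow_typing: "dom1 K u = P" "cod1 K u = Lc" "dom1 K w = Lc" "cod1 K w = P"
  using u(1) w(1) by (simp_all add: arr1_def)

lemma q_p'_w: "comp1 K q (comp1 K p' w) = comp1 K c qc"
proof -
  have "comp1 K (comp1 K q p') w = comp1 K (comp1 K c q') w"
    using arg_cong[OF w(5), of "src2 K"] arg_cong[OF w(5), of "tgt2 K"] typing arrow_typing by simp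
  then show ?thesis
    using typing arrow_typing w(3) by (simp add: comp1_assoc)
qed

lemma comparison_section: "comp1 K u w = id1 K Lc"
proof (rule lax_pullback_factor_unique[OF composite])
  show "arr1 K (comp1 K u w) Lc Lc" "arr1 K (id1 K Lc) Lc Lc"
    using arrow_typing by (simp_all add: arr1_def)
  have "comp1 K pc (comp1 K u w) = comp1 K (comp1 K pc u) w"
    using typing arrow_typing by (simp add: comp1_assoc)
  also have "\<dots> = pc"
    using typing arrow_typing u(2) w(2) by (simp add: comp1_assoc)
  finally show "comp1 K pc (comp1 K u w) = comp1 K pc (id1 K Lc)"
    using typing by simp
  have "comp1 K qc (comp1 K u w) = comp1 K (comp1 K qc u) w"
    using typing arrow_typing by (simp add: comp1_assoc)
  then show "comp1 K qc (comp1 K u w) = comp1 K qc (id1 K Lc)"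
    using typing u(3) w(3) by simp
  have "rw K lc (comp1 K u w) = rw K (rw K lc u) w"
    using typing arrow_typing by (simp add: rw_rw)
  also have "\<dots> = vcomp K (rw K (lw K i l') w) (rw K (rw K l p') w)"
    unfolding u(4) by (rule rw_vcomp) (use typing arrow_typing in \<open>simp_all add: comp1_assoc\<close>)
  also have "\<dots> = vcomp K (lw K i (rw K l' w)) (rw K l (comp1 K p' w))"
    using typing arrow_typing by (simp add: rw_lw rw_rw)
  also have "\<dots> = lc"
    using typing w(4,5) by (simp add: comp1_assoc)
  finally show "rw K lc (comp1 K u w) = rw K lc (id1 K Lc)"
    using typing by simp
qed

lemma comparison_unit_outer:
  obtains \<alpha> where "cell2 K \<alpha> p' (comp1 K (comp1 K p' w) u)"
    "lw K p \<alpha> = id2 K (comp1 K p p')" "lw K q \<alpha> = l'"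
proof -
  let ?v = "comp1 K (comp1 K p' w) u"
  have p_v: "comp1 K p ?v = comp1 K p p'"
  proof -
    have "comp1 K p ?v = comp1 K (comp1 K p (comp1 K p' w)) u"
      using typing arrow_typing by (simp add: comp1_assoc)
    then show ?thesis
      using u(2) w(2) by simp
  qed
  have q_v: "comp1 K q ?v = comp1 K c q'"
  proof -
    have "comp1 K q ?v = comp1 K (comp1 K q (comp1 K p' w)) u"
      using typing arrow_typing by (simp add: comp1_assoc)
    also have "\<dots> = comp1 K (comp1 K c qc) u"
      by (simp only: q_p'_w)
    also have "\<dots> = comp1 K c (comp1 K qc u)"
      using typing arrow_typing by (simp add: comp1_assoc)
    finally show ?thesis
      using u(3) by simp
  qed
  show ?thesis
  proof (rule lax_pullback_2cell[OF outer])
    show "arr1 K p' P L" "arr1 K ?v P L"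
      using typing arrow_typing by (simp_all add: arr1_def)
    show "cell2 K (id2 K (comp1 K p p')) (comp1 K p p') (comp1 K p ?v)"
      using p_v by (simp add: cell2_def)
    show "cell2 K l' (comp1 K q p') (comp1 K q ?v)"
      using typing q_v by (simp add: cell2_def)
    have "rw K l ?v = rw K (rw K l (comp1 K p' w)) u"
      using typing arrow_typing by (simp add: rw_rw)
    then show "vcomp K (lw K i l') (rw K l p') =
        vcomp K (rw K l ?v) (lw K y (id2 K (comp1 K p p')))"
      using typing w(4) u(4) by (simp add: comp1_assoc)
  qed (rule that)
qed

lemma comparison_unit:
  obtains \<epsilon> where "cell2 K \<epsilon> (id1 K P) (comp1 K w u)"
    "lw K (comp1 K p p') \<epsilon> = id2 K (comp1 K p p')" "lw K q' \<epsilon> = id2 K q'"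
proof -
  obtain \<alpha> where \<alpha>: "cell2 K \<alpha> p' (comp1 K (comp1 K p' w) u)" "lw K p \<alpha> = id2 K (comp1 K p p')"
      "lw K q \<alpha> = l'"
    by (rule comparison_unit_outer)
  obtain \<epsilon> where \<epsilon>: "cell2 K \<epsilon> (id1 K P) (comp1 K w u)" "lw K p' \<epsilon> = \<alpha>" "lw K q' \<epsilon> = id2 K q'"
  proof (rule lax_pullback_2cell[OF inner])
    show "arr1 K (id1 K P) P P" "arr1 K (comp1 K w u) P P"
      using arrow_typing by (simp_all add: arr1_def)
    show "cell2 K \<alpha> (comp1 K p' (id1 K P)) (comp1 K p' (comp1 K w u))"
      using typing arrow_typing \<alpha>(1) by (simp add: cell2_def comp1_assoc)
    have "comp1 K q' (comp1 K w u) = comp1 K (comp1 K q' w) u"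
      using typing arrow_typing by (simp add: comp1_assoc)
    then show "cell2 K (id2 K q') (comp1 K q' (id1 K P)) (comp1 K q' (comp1 K w u))"
      using typing u(3) w(3) by (simp add: cell2_def)
    have "rw K l' (comp1 K w u) = rw K (rw K l' w) u"
      using typing arrow_typing by (simp add: rw_rw)
    then have "rw K l' (comp1 K w u) = id2 K (comp1 K c q')"
      using typing arrow_typing w(5) u(3) by (simp add: comp1_assoc)
    then show "vcomp K (lw K c (id2 K q')) (rw K l' (id1 K P)) =
        vcomp K (rw K l' (comp1 K w u)) (lw K q \<alpha>)"
      using typing \<alpha>(3) by simp
  qed
  have "lw K (comp1 K p p') \<epsilon> = lw K p (lw K p' \<epsilon>)"
    using typing \<epsilon>(1) by (simp add: cell2_def lw_lw)
  then show ?thesis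
    using that \<epsilon> \<alpha>(2) by simp
qed

end


lemma left_ext_pasted:
  assumes "left_ext K lc (comp1 K y pc) qc (comp1 K i c)"
  shows "left_ext K (vcomp K (lw K i l') (rw K l p')) (comp1 K y (comp1 K p p')) q' (comp1 K i c)"
proof -
  obtain u where u: "arr1 K u P Lc" "comp1 K pc u = comp1 K p p'" "comp1 K qc u = q'"
      "rw K lc u = vcomp K (lw K i l') (rw K l p')"
    by (rule comparison_arrow)
  obtain w where w: "arr1 K w Lc P" "comp1 K p (comp1 K p' w) = pc" "comp1 K q' w = qc"
      "rw K l (comp1 K p' w) = lc" "rw K l' w = id2 K (comp1 K c qc)"
    by (rule section_arrow)
  obtain \<epsilon> where \<epsilon>: "cell2 K \<epsilon> (id1 K P) (comp1 K w u)"
      "lw K (comp1 K p p') \<epsilon> = id2 K (comp1 K p p')" "lw K q' \<epsilon> = id2 K q'"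
    by (rule comparison_unit[OF u w])
  have y_pc_u: "comp1 K (comp1 K y pc) u = comp1 K y (comp1 K p p')"
    using typing arrow_typing[OF u w] u(2) by (simp add: comp1_assoc)
  have "lw K (comp1 K y (comp1 K p p')) \<epsilon> = lw K y (lw K (comp1 K p p') \<epsilon>)"
    using typing \<epsilon>(1) by (simp add: cell2_def lw_lw)
  then have y_\<epsilon>: "lw K (comp1 K y (comp1 K p p')) \<epsilon> = id2 K (comp1 K y (comp1 K p p'))"
    using typing \<epsilon>(2) by simp
  have "left_ext K (rw K lc u) (comp1 K (comp1 K y pc) u) (comp1 K qc u) (comp1 K i c)"
    by (rule left_ext_restrict_reflection[OF assms])
      (use typing u(1,3) w(1) comparison_section[OF u w] \<epsilon>(1,3) y_pc_u y_\<epsilon> in simp_all)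
  then show ?thesis
    using u(3,4) y_pc_u by simp
qed

end

section \<open>Good yoneda structures\<close>

locale good_yoneda_structure = strict_two_category K for K :: "('o,'a,'c,'x) two_cat_scheme" +
  fixes Y :: "('o,'a,'c,'y) yoneda_data_scheme"
  assumes good_yoneda: "good_yoneda K Y"
begin

lemma yon_arr1:
  "admissible_obj K Y C \<Longrightarrow> arr1 K (yon Y C) C (PSh Y C) \<and> yon Y C \<in> adm Y"
  using good_yoneda unfolding good_yoneda_def by blast

lemma chi_abs_left_lift:
  assumes "admissible_obj K Y C" "arr1 K f C A" "f \<in> adm Y"
  shows "arr1 K (Bhom Y f) A (PSh Y C)" "cell2 K (chi Y f) (yon Y C) (comp1 K (Bhom Y f) f)"
    "abs_left_lift K (chi Y f) (yon Y C) f (Bhom Y f)"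
  using good_yoneda assms unfolding good_yoneda_def arr1_def by auto

lemma abs_left_lift_pointwise:
  "admissible_obj K Y (dom1 K f) \<Longrightarrow> f \<in> adm Y \<Longrightarrow> abs_left_lift K \<psi> (yon Y (dom1 K f)) f g \<Longrightarrow>
    pointwise_left_ext K \<psi> (yon Y (dom1 K f)) f g"
  using good_yoneda unfolding good_yoneda_def by blast

lemma lax_pullback_left_ext:
  assumes C: "admissible_obj K Y C" and i: "arr1 K i X (PSh Y C)"
    and lp: "is_lax_pullback K (yon Y C) i L p q l"
  shows "left_ext K l (comp1 K (yon Y C) p) q i"
proof -
  note y = yon_arr1[OF C]
  have "pointwise_left_ext K (id2 K (yon Y C)) (yon Y C) (yon Y C) (id1 K (PSh Y C))"
    using abs_left_lift_pointwise[of "yon Y C"] abs_left_lift_id2[of "yon Y C"] C y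
    by (simp add: arr1_def)
  then have "left_ext K (vcomp K (lw K (id1 K (PSh Y C)) l) (rw K (id2 K (yon Y C)) p))
      (comp1 K (yon Y C) p) q (comp1 K (id1 K (PSh Y C)) i)"
    using lp i y unfolding pointwise_left_ext_def by (auto simp: arr1_def)
  then show ?thesis
    using lax_pullbackD[OF lp] y i by (simp add: arr1_def)
qed

lemma restricted_left_lift_iff_left_ext:
  assumes complete: "finitely_complete K" and C: "admissible_obj K Y C"
    and f: "arr1 K f C A" "f \<in> adm Y" and i: "arr1 K i M (PSh Y C)"
    and lp: "is_lax_pullback K (yon Y C) i L p q l"
    and k: "arr1 K k M A"
    and \<eta>: "cell2 K \<eta> i (comp1 K (Bhom Y f) k)" and \<eta>': "cell2 K \<eta>' (comp1 K f p) (comp1 K k q)"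
    and mate: "vcomp K (lw K (Bhom Y f) \<eta>') (rw K (chi Y f) p) = vcomp K (rw K \<eta> q) l"
    and c: "arr1 K c X M" and lp_c: "is_lax_pullback K q c P p' q' l'"
  shows "left_lift K (rw K \<eta> c) (comp1 K i c) (comp1 K k c) (Bhom Y f) \<longleftrightarrow>
    left_ext K (vcomp K (lw K k l') (rw K \<eta>' p')) (comp1 K (comp1 K f p) p') q' (comp1 K k c)"
proof -
  note \<chi> = chi_abs_left_lift[OF C f]
  note typing = lax_pullbackD[OF lp] lax_pullbackD[OF lp_c] yon_arr1[OF C, unfolded arr1_def]
    i[unfolded arr1_def] c[unfolded arr1_def] f(1)[unfolded arr1_def] k[unfolded arr1_def]
    \<chi>(1)[unfolded arr1_def] \<chi>(2)[unfolded cell2_def]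
  obtain Lc pc qc lc where composite: "is_lax_pullback K (yon Y C) (comp1 K i c) Lc pc qc lc"
    using complete typing unfolding finitely_complete_def by (metis cod_comp1)
  interpret pasting: lax_pullback_pasting K "yon Y C" i c X L P Lc p q p' q' pc qc l l' lc
    by unfold_locales (use lp c lp_c composite typing in \<open>simp_all add: arr1_def\<close>)
  have "left_ext K (vcomp K (lw K i l') (rw K l p')) (comp1 K (yon Y C) (comp1 K p p')) q'
      (comp1 K i c)"
    by (rule pasting.left_ext_pasted[OF lax_pullback_left_ext[OF C _ composite]])
      (use typing in \<open>simp add: arr1_def\<close>)
  then have \<theta>: "left_ext K (vcomp K (lw K i l') (rw K l p')) (comp1 K (comp1 K (yon Y C) p) p') q'
      (comp1 K i c)"
    using typing by (simp add: comp1_assoc)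
  have "left_lift K (rw K (chi Y f) (comp1 K p p')) (comp1 K (yon Y C) (comp1 K p p'))
      (comp1 K f (comp1 K p p')) (Bhom Y f)"
    using \<chi>(3) typing unfolding abs_left_lift_def by (simp add: arr1_def)
  then have \<psi>: "left_lift K (rw K (rw K (chi Y f) p) p') (comp1 K (comp1 K (yon Y C) p) p')
      (comp1 K (comp1 K f p) p') (Bhom Y f)"
    using typing by (simp add: rw_rw comp1_assoc)
  have mate_c: "vcomp K (lw K (Bhom Y f) (vcomp K (lw K k l') (rw K \<eta>' p')))
        (rw K (rw K (chi Y f) p) p') =
      vcomp K (rw K (rw K \<eta> c) q') (vcomp K (lw K i l') (rw K l p'))"
    by (rule mate_paste[OF _ _ _ i _ _ c _ _ _ \<eta> \<eta>' _ mate])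
      (use typing in \<open>simp_all add: arr1_def cell2_def comp1_assoc\<close>)
  show ?thesis
    by (rule left_lift_iff_left_ext[OF \<theta> \<psi> _ _ _ mate_c])
      (use typing \<eta> \<eta>' in \<open>simp_all add: arr1_def cell2_def comp1_assoc\<close>)
qed

end

theorem lemma3p13:
  fixes K :: "('o,'a,'c,'x) two_cat_scheme"
    and Y :: "('o,'a,'c,'y) yoneda_data_scheme"
    and C M A L :: 'o
    and i f p q k :: 'a
    and l \<eta> \<eta>' :: 'c
  assumes "two_category K"
    and "finitely_complete K"
    and "good_yoneda K Y"
    and "small_obj K Y C"
    and "arr1 K i M (PSh Y C)" and "admissible_obj K Y M"
    and "arr1 K f C A" and "f \<in> adm Y"
    and "is_lax_pullback K (yon Y C) i L p q l"
    and "arr1 K k M A"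
    and "cell2 K \<eta> i (comp1 K (Bhom Y f) k)"
    and "cell2 K \<eta>' (comp1 K f p) (comp1 K k q)"
    and "vcomp K (lw K (Bhom Y f) \<eta>') (rw K (chi Y f) p) = vcomp K (rw K \<eta> q) l"
  shows "(left_lift K \<eta> i k (Bhom Y f) \<longleftrightarrow> left_ext K \<eta>' (comp1 K f p) q k) \<and>
         (abs_left_lift K \<eta> i k (Bhom Y f) \<longleftrightarrow> pointwise_left_ext K \<eta>' (comp1 K f p) q k)"
proof -
  note complete = assms(2) and i = assms(5) and f = assms(7,8) and lp = assms(9)
    and k = assms(10) and \<eta> = assms(11) and \<eta>' = assms(12) and mate = assms(13)
  interpret good_yoneda_structure K Y
    using strict_two_categoryI[OF assms(1)] assms(3)
    by (simp add: good_yoneda_structure_def good_yoneda_structure_axioms_def)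
  \<comment> \<open>Neither \<open>M\<close> nor \<open>\<P>C\<close> needs to be admissible for the argument.\<close>
  have C: "admissible_obj K Y C"
    using assms(4) unfolding small_obj_def by simp
  note typing = lax_pullbackD[OF lp] yon_arr1[OF C, unfolded arr1_def] f(1)[unfolded arr1_def]
    i[unfolded arr1_def] k[unfolded arr1_def]
  have \<theta>: "left_ext K l (comp1 K (yon Y C) p) q i"
    by (rule lax_pullback_left_ext[OF C i lp])
  have \<psi>: "left_lift K (rw K (chi Y f) p) (comp1 K (yon Y C) p) (comp1 K f p) (Bhom Y f)"
    using chi_abs_left_lift(3)[OF C f] typing unfolding abs_left_lift_def by (simp add: arr1_def)
  have "left_lift K \<eta> i k (Bhom Y f) \<longleftrightarrow> left_ext K \<eta>' (comp1 K f p) q k"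
    by (rule left_lift_iff_left_ext[OF \<theta> \<psi> _ \<eta> \<eta>' mate]) (use typing k in \<open>simp add: arr1_def\<close>)
  moreover have "abs_left_lift K \<eta> i k (Bhom Y f) \<longleftrightarrow> pointwise_left_ext K \<eta>' (comp1 K f p) q k"
  proof (rule abs_left_lift_iff_pointwise_left_ext[OF complete _ _ k i \<eta> \<eta>'])
    show "arr1 K q L M" "arr1 K (comp1 K f p) L A"
      using typing by (simp_all add: arr1_def)
    show "left_lift K (rw K \<eta> c) (comp1 K i c) (comp1 K k c) (Bhom Y f) \<longleftrightarrow>
        left_ext K (vcomp K (lw K k l') (rw K \<eta>' p')) (comp1 K (comp1 K f p) p') q' (comp1 K k c)"
      if "arr1 K c X M" "is_lax_pullback K q c P' p' q' l'" for X c P' p' q' l'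
      by (rule restricted_left_lift_iff_left_ext[OF complete C f i lp k \<eta> \<eta>' mate that])
  qed
  ultimately show ?thesis ..
qed

end
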